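(* Let $c\in\mathbb{C}(t)$, $c\notin\{0,1,t\}$, with homogeneous lift $C$, and let $F_1=(P_1,Q_1)$, $d$ and $G_C$ be as in the context. Then $$G_C(1,0)=\frac1d\log|P_1(1,0)|,\qquad G_C(0,1)=\frac1d\log|P_1(0,1)|,\qquad G_C(1,1)=\frac1d\log|P_1(1,1)-Q_1(1,1)|.$$
   Context: $F_{t_1,t_2}(z,w)=\big((t_1w^2-t_2z^2)^2,\;4t_2zw(w-z)(t_1w-t_2z)\big)$. $C=(c_1,c_2)$ is a pair of coprime homogeneous polynomials in $(t_1,t_2)$ of equal degree with $c(t)=c_1(t,1)/c_2(t,1)$. $F_1=F_{t_1,t_2}(C)/\gcd(F_{t_1,t_2}(C))=(P_1,Q_1)$ (dividing by the gcd of the two coordinates), $d=\deg F_1$, $F_{n+1}=F_{t_1,t_2}(F_n)/t_2^2$ (substitution of the coordinates of $F_n$ for $(z,w)$), and $G_C(t_1,t_2)=\lim_{n\to\infty}\frac{1}{4^{n-1}d}\log\max\{|\cdot|,|\cdot|\}$ of $F_n(t_1,t_2)$, the locally uniform limit on $\mathbb{C}^2\setminus\{(0,0)\}$. *)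

theory Defs
  imports Complex_Main "HOL-Computational_Algebra.Polynomial_Factorial"
    "HOL-Computational_Algebra.Fraction_Field" "HOL-Computational_Algebra.Field_as_Ring"
begin

text \<open>Bivariate polynomials in (t1,t2) are represented as complex poly poly:
 the outer variable is t2, the coefficients are polynomials in t1.\<close>

definition T1 :: "complex poly poly" where "T1 = [:[:0, 1:]:]"
definition T2 :: "complex poly poly" where "T2 = [:0, 1:]"

definition ev2 :: "complex poly poly \<Rightarrow> complex \<Rightarrow> complex \<Rightarrow> complex" where
  "ev2 P a b = poly (poly P [:b:]) a"

definition homogeneous :: "complex poly poly \<Rightarrow> nat \<Rightarrow> bool" where
  "homogeneous P m \<longleftrightarrow> (\<forall>i j. coeff (coeff P j) i \<noteq> 0 \<longrightarrow> i + j = m)"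

definition tdeg :: "complex poly poly \<Rightarrow> nat" where
  "tdeg P = Max ({i + j | i j. coeff (coeff P j) i \<noteq> 0} \<union> {0})"

definition Fmap :: "complex poly poly \<times> complex poly poly \<Rightarrow> complex poly poly \<times> complex poly poly" where
  "Fmap zw = (let z = fst zw; w = snd zw in
     ((T1 * w^2 - T2 * z^2)^2, 4 * T2 * z * w * (w - z) * (T1 * w - T2 * z)))"

definition F1 :: "complex poly poly \<Rightarrow> complex poly poly \<Rightarrow> complex poly poly \<times> complex poly poly" where
  "F1 c1 c2 = (let AB = Fmap (c1, c2); g = gcd (fst AB) (snd AB) in
     (fst AB div g, snd AB div g))"

text \<open>Fit c1 c2 n = F_{n+1}.\<close>
fun Fit :: "complex poly poly \<Rightarrow> complex poly poly \<Rightarrow> nat \<Rightarrow> complex poly poly \<times> complex poly poly" where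
  "Fit c1 c2 0 = F1 c1 c2"
| "Fit c1 c2 (Suc n) = (let AB = Fmap (Fit c1 c2 n) in (fst AB div T2^2, snd AB div T2^2))"

definition degF1 :: "complex poly poly \<Rightarrow> complex poly poly \<Rightarrow> nat" where
  "degF1 c1 c2 = max (tdeg (fst (F1 c1 c2))) (tdeg (snd (F1 c1 c2)))"

text \<open>Gapprox c1 c2 n a b = (1/(4^n d)) log max(|P_{n+1}(a,b)|,|Q_{n+1}(a,b)|);
  G_C is its limit as n tends to infinity.\<close>
definition Gapprox :: "complex poly poly \<Rightarrow> complex poly poly \<Rightarrow> nat \<Rightarrow> complex \<Rightarrow> complex \<Rightarrow> real" where
  "Gapprox c1 c2 n a b =
     ln (max (cmod (ev2 (fst (Fit c1 c2 n)) a b)) (cmod (ev2 (snd (Fit c1 c2 n)) a b)))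
     / (4 ^ n * real (degF1 c1 c2))"

end

theory Submission
  imports Defs
begin

text \<open>It forces \<open>t2\<close> to divide \<open>Q_1\<close>, and the
  recursion \<open>F_{n+1} = F(F_n)/t2\<^sup>2\<close> preserves this, so \<open>Q_n = t2 R_n\<close> for all \<open>n\<close>. At the
  points \<open>(1,0)\<close>, \<open>(0,1)\<close> and \<open>(1,1)\<close> the recursion then makes \<open>P_n\<close>, \<open>P_n\<close> and \<open>P_n - Q_n\<close>
  respectively evolve by \<open>x \<mapsto> x\<^sup>4\<close>, while \<open>M_n = max |P_n| |Q_n|\<close> stays comparable to it from
  below and satisfies \<open>M_{n+1} \<le> K M_n\<^sup>2 x_n\<^sup>2\<close>. Hence \<open>ln (M_n / |x_n|)\<close> grows at most like
  \<open>2\<^sup>n\<close>, which vanishes against the normalisation \<open>4\<^sup>n\<close>.\<close>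

lemma ev2_simps [simp]:
  "ev2 (p * q) a b = ev2 p a b * ev2 q a b" "ev2 (p + q) a b = ev2 p a b + ev2 q a b"
  "ev2 (p - q) a b = ev2 p a b - ev2 q a b" "ev2 (p ^ k) a b = ev2 p a b ^ k"
  "ev2 (numeral n) a b = numeral n" "ev2 T1 a b = a" "ev2 T2 a b = b"
  by (simp_all add: ev2_def T1_def T2_def)

lemma T2_dvd_iff: "T2 dvd p \<longleftrightarrow> poly p 0 = 0"
  using dvd_iff_poly_eq_0[of 0 p] by (simp add: T2_def)

lemma prime_elem_T2: "prime_elem T2"
  unfolding prime_elem_def by (auto simp: T2_dvd_iff) (simp add: T2_def)

lemma T2_not_dvd_T1: "\<not> T2 dvd T1"
  by (simp add: T2_dvd_iff T1_def)

lemma prime_dvd_div_gcd: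
  fixes a b p :: "'a :: factorial_semiring_gcd"
  assumes "prime_elem p" "p ^ k dvd b" "\<not> p ^ k dvd a"
  shows "p dvd b div gcd a b"
proof (rule ccontr)
  assume "\<not> p dvd b div gcd a b"
  then have "coprime (p ^ k) (b div gcd a b)"
    using assms(1) prime_elem_imp_coprime by auto
  moreover have "p ^ k dvd gcd a b * (b div gcd a b)"
    using assms(2) by simp
  ultimately have "p ^ k dvd gcd a b"
    using coprime_dvd_mult_left_iff by blast
  then show False
    using assms(3) dvd_trans by blast
qed

lemma T2_dvd_snd_F1:
  assumes "coprime c1 c2"
  shows "T2 dvd snd (F1 c1 c2)"
proof -
  define P where "P = (T1 * c2^2 - T2 * c1^2)^2"
  define Q where "Q = 4 * T2 * c1 * c2 * (c2 - c1) * (T1 * c2 - T2 * c1)"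
  have F1_eq: "snd (F1 c1 c2) = Q div gcd P Q"
    by (simp add: F1_def Fmap_def P_def Q_def Let_def)
  \<comment> \<open>\<open>t2\<close> divides \<open>Q\<close> to a higher power than \<open>P\<close>, so it survives division by the gcd.\<close>
  show ?thesis
  proof (cases "T2 dvd c2")
    case False
    have "\<not> T2 dvd T1 * c2^2 - T2 * c1^2"
    proof
      assume "T2 dvd T1 * c2^2 - T2 * c1^2"
      then have "T2 dvd T1 * c2^2"
        by (metis dvd_add_right_iff dvd_triv_left diff_add_cancel)
      with False T2_not_dvd_T1 show False
        by (metis prime_elem_T2 prime_elem_dvd_mult_iff prime_elem_dvd_power)
    qed
    then have "\<not> T2 ^ 1 dvd P"
      by (simp add: P_def prime_elem_dvd_power_iff[OF prime_elem_T2])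
    moreover have "T2 ^ 1 dvd Q"
      by (simp add: Q_def)
    ultimately show ?thesis
      unfolding F1_eq using prime_elem_T2 prime_dvd_div_gcd by blast
  next
    case True
    then obtain e where e: "c2 = T2 * e" ..
    have "\<not> T2 dvd c1"
      using assms True prime_elem_T2 coprime_common_divisor prime_elem_not_unit by blast
    have "\<not> T2 dvd T1 * T2 * e^2 - c1^2"
    proof
      assume "T2 dvd T1 * T2 * e^2 - c1^2"
      moreover have "T2 dvd T1 * T2 * e^2"
        by simp
      ultimately have "T2 dvd T1 * T2 * e^2 - (T1 * T2 * e^2 - c1^2)"
        using dvd_diff by blast
      then have "T2 dvd c1^2"
        by simp
      with \<open>\<not> T2 dvd c1\<close> show False
        using prime_elem_T2 prime_elem_dvd_power by blast
    qed
    then have "\<not> T2^2 * T2 dvd T2^2 * (T1 * T2 * e^2 - c1^2)^2"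
      by (subst dvd_mult_cancel_left)
        (simp_all add: T2_def prime_elem_dvd_power_iff[OF prime_elem_T2, unfolded T2_def])
    moreover have "P = T2^2 * (T1 * T2 * e^2 - c1^2)^2"
      unfolding P_def e by (simp add: algebra_simps power2_eq_square)
    ultimately have "\<not> T2 ^ 3 dvd P"
      by (simp add: power3_eq_cube power2_eq_square mult.assoc)
    moreover have "Q = T2^3 * (4 * c1 * e * (c2 - c1) * (T1 * e - c1))"
      unfolding Q_def e by (simp add: algebra_simps power3_eq_cube)
    then have "T2 ^ 3 dvd Q"
      by simp
    ultimately show ?thesis
      unfolding F1_eq using prime_elem_T2 prime_dvd_div_gcd by blast
  qed
qed

lemma Fit_Suc_eq:
  assumes "snd (Fit c1 c2 n) = T2 * R"
  defines "P \<equiv> fst (Fit c1 c2 n)"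
  shows "Fit c1 c2 (Suc n) =
    ((T1 * T2 * R^2 - P^2)^2, 4 * T2 * P * R * (T2 * R - P) * (T1 * R - P))"
proof -
  have "T2^2 \<noteq> 0"
    by (simp add: T2_def)
  have "Fit c1 c2 n = (P, T2 * R)"
    using assms by (simp add: prod_eq_iff)
  then have "Fit c1 c2 (Suc n) = ((T1 * (T2 * R)^2 - T2 * P^2)^2 div T2^2,
      4 * T2 * P * (T2 * R) * (T2 * R - P) * (T1 * (T2 * R) - T2 * P) div T2^2)"
    by (simp only: Fit.simps Fmap_def Let_def fst_conv snd_conv)
  also have "\<dots> = (T2^2 * (T1 * T2 * R^2 - P^2)^2 div T2^2,
      T2^2 * (4 * T2 * P * R * (T2 * R - P) * (T1 * R - P)) div T2^2)"
    by (simp add: algebra_simps power2_eq_square)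
  also have "\<dots> = ((T1 * T2 * R^2 - P^2)^2, 4 * T2 * P * R * (T2 * R - P) * (T1 * R - P))"
    using \<open>T2^2 \<noteq> 0\<close> by (metis nonzero_mult_div_cancel_left)
  finally show ?thesis .
qed

lemma T2_dvd_snd_Fit:
  assumes "coprime c1 c2"
  shows "T2 dvd snd (Fit c1 c2 n)"
proof (induction n)
  case 0
  then show ?case
    using T2_dvd_snd_F1[OF assms] by simp
next
  case (Suc n)
  then obtain R where "snd (Fit c1 c2 n) = T2 * R" ..
  from Fit_Suc_eq[OF this] show ?case
    by simp
qed

lemma tendsto_div_four_pow_of_doubling_bound:
  fixes L :: "nat \<Rightarrow> real"
  assumes L_Suc: "\<And>n. L (Suc n) \<le> B + 2 * L n" and L_lower: "\<And>n. l \<le> L n"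
  shows "(\<lambda>n. L n / 4^n) \<longlonglongrightarrow> 0"
proof (rule real_tendsto_sandwich)
  have L_upper: "L n + B \<le> 2^n * (L 0 + B)" for n
  proof (induction n)
    case (Suc n)
    then show ?case
      using L_Suc[of n] by simp
  qed simp
  have "L n / 4^n \<le> (L 0 + B) / 2^n - B / 4^n" for n
  proof -
    have "L n / 4^n \<le> (2^n * (L 0 + B) - B) / 4^n"
      using L_upper[of n] by (simp add: divide_right_mono)
    moreover have "(4::real)^n = 2^n * 2^n"
      by (simp flip: power_mult_distrib)
    ultimately show ?thesis
      by (simp add: diff_divide_distrib)
  qed
  then show "\<forall>\<^sub>F n in sequentially. L n / 4^n \<le> (L 0 + B) / 2^n - B / 4^n"
    by (intro always_eventually allI)
  show "\<forall>\<^sub>F n in sequentially. l / 4^n \<le> L n / 4^n"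
    using L_lower by (simp add: divide_right_mono)
  show "(\<lambda>n. l / 4^n) \<longlonglongrightarrow> (0::real)"
    by (rule LIMSEQ_divide_realpow_zero) simp
  have "(\<lambda>n. (L 0 + B) / 2^n - B / 4^n) \<longlonglongrightarrow> (0::real) - 0"
    by (intro tendsto_diff LIMSEQ_divide_realpow_zero) simp_all
  then show "(\<lambda>n. (L 0 + B) / 2^n - B / 4^n) \<longlonglongrightarrow> (0::real)"
    by simp
qed

text \<open>When \<open>x 0 = 0\<close>, the claim holds only through the junk value \<open>ln 0 = 0\<close>.\<close>

lemma tendsto_ln_div_four_pow:
  fixes x :: "nat \<Rightarrow> 'a :: real_normed_div_algebra" and y :: "nat \<Rightarrow> real" and c K d :: real
  assumes x_Suc: "\<And>n. x (Suc n) = x n ^ 4" and y_nonneg: "\<And>n. 0 \<le> y n"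
    and "c > 0" and y_lower: "\<And>n. c * norm (x n) \<le> y n"
    and "K > 0" and y_Suc: "\<And>n. y (Suc n) \<le> K * (y n)^2 * (norm (x n))^2"
  shows "(\<lambda>n. ln (y n) / (4^n * d)) \<longlonglongrightarrow> ln (norm (x 0)) / d"
proof (cases "x 0 = 0")
  case True
  then have "x n = 0" for n
    by (induction n) (simp_all add: x_Suc)
  then have "y (Suc n) = 0" for n
    using y_Suc[of n] y_nonneg[of "Suc n"] by simp
  with True have "(\<lambda>n. ln (y (Suc n)) / (4^Suc n * d)) \<longlonglongrightarrow> ln (norm (x 0)) / d"
    by simp
  then show ?thesis
    by (rule LIMSEQ_imp_Suc)
next
  case False
  define a where "a = norm (x 0)"
  have "a > 0"
    using False by (simp add: a_def)
  have norm_x: "norm (x n) = a ^ 4^n" for n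
    by (induction n) (simp_all add: a_def x_Suc norm_power power_mult[symmetric] mult.commute)
  then have x_pos: "norm (x n) > 0" for n
    using \<open>a > 0\<close> by simp
  define L where "L n = ln (y n / norm (x n))" for n
  have ratio_lower: "c \<le> y n / norm (x n)" for n
    using y_lower[of n] x_pos[of n] by (simp add: field_simps)
  have ratio_pos: "0 < y n / norm (x n)" for n
    using ratio_lower[of n] \<open>c > 0\<close> by linarith
  have y_pos: "0 < y n" for n
    using ratio_pos[of n] x_pos[of n] by (simp add: zero_less_divide_iff)
  have ratio_Suc: "y (Suc n) / norm (x (Suc n)) \<le> K * (y n / norm (x n))^2" for n
  proof -
    have "y (Suc n) / norm (x (Suc n)) \<le> K * (y n)^2 * (norm (x n))^2 / norm (x n) ^ 4"
      using y_Suc[of n] x_pos[of n] by (simp add: x_Suc norm_power divide_right_mono)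
    also have "\<dots> = K * (y n / norm (x n))^2"
      using x_pos[of n] by (simp add: power_divide power4_eq_xxxx power2_eq_square)
    finally show ?thesis .
  qed
  have "(\<lambda>n. L n / 4^n) \<longlonglongrightarrow> 0"
  proof (rule tendsto_div_four_pow_of_doubling_bound)
    show "ln c \<le> L n" for n
      unfolding L_def using ratio_lower[of n] \<open>c > 0\<close> by (rule ln_mono)
    show "L (Suc n) \<le> ln K + 2 * L n" for n
    proof -
      have "L (Suc n) \<le> ln (K * (y n / norm (x n))^2)"
        unfolding L_def using ratio_Suc[of n] ratio_pos[of "Suc n"] by (rule ln_mono)
      also have "\<dots> = ln K + 2 * L n"
        using y_pos[of n] x_pos[of n] \<open>K > 0\<close> by (simp add: L_def ln_mult ln_realpow)
      finally show ?thesis .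
    qed
  qed
  then have "(\<lambda>n. ln a / d + (L n / 4^n) / d) \<longlonglongrightarrow> ln a / d + 0"
    by (intro tendsto_add tendsto_const tendsto_divide_zero)
  moreover have "ln (y n) / (4^n * d) = ln a / d + (L n / 4^n) / d" for n
  proof -
    have "ln (y n) = 4^n * ln a + L n"
      using y_pos[of n] x_pos[of n] \<open>a > 0\<close> by (simp add: L_def ln_div norm_x ln_realpow)
    then show ?thesis
      by (simp add: add_divide_distrib)
  qed
  ultimately show ?thesis
    by (simp add: a_def)
qed

lemma max_norm_step_at_0_1:
  fixes p q :: "'a :: real_normed_field"
  shows "max (norm (p^4)) (norm (4 * p * q * (q - p) * (0 - p)))
    \<le> 8 * (max (norm p) (norm q))^2 * (norm p)^2"
proof -
  define y where "y = max (norm p) (norm q)"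
  have "norm p \<le> y" "norm q \<le> y" "0 \<le> y"
    by (auto simp: y_def le_max_iff_disj)
  then have "norm (q - p) \<le> 2 * y"
    using norm_triangle_ineq4[of q p] by linarith
  have "norm (p^4) = (norm p)^2 * (norm p)^2"
    by (simp add: norm_power flip: power_add)
  also have "\<dots> \<le> 8 * y^2 * (norm p)^2"
    using power_mono[OF \<open>norm p \<le> y\<close> norm_ge_zero, of 2] zero_le_power2[of y]
    by (intro mult_right_mono) (linarith, simp)
  finally have fourth_power_bound: "norm (p^4) \<le> 8 * y^2 * (norm p)^2" .
  have "norm (4 * p * q * (q - p) * (0 - p)) = 4 * (norm p)^2 * (norm q * norm (q - p))"
    by (simp add: norm_mult power2_eq_square)
  also have "\<dots> \<le> 4 * (norm p)^2 * (y * (2 * y))"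
    using \<open>norm q \<le> y\<close> \<open>norm (q - p) \<le> 2 * y\<close> \<open>0 \<le> y\<close>
    by (intro mult_left_mono mult_mono) auto
  also have "\<dots> = 8 * y^2 * (norm p)^2"
    by (simp add: power2_eq_square)
  finally show ?thesis
    using fourth_power_bound
    by (simp add: y_def)
qed

lemma max_norm_step_at_1_1:
  fixes p q :: "'a :: real_normed_field"
  shows "max (norm ((q^2 - p^2)^2)) (norm (4 * p * q * (q - p) * (q - p)))
    \<le> 4 * (max (norm p) (norm q))^2 * (norm (p - q))^2"
proof -
  define y where "y = max (norm p) (norm q)"
  have "norm p \<le> y" "norm q \<le> y" "0 \<le> y"
    by (auto simp: y_def le_max_iff_disj)
  then have "norm (q + p) \<le> 2 * y"
    using norm_triangle_ineq[of q p] by linarith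
  have "(q^2 - p^2)^2 = (q + p)^2 * (p - q)^2"
    by (simp add: power2_eq_square algebra_simps)
  then have "norm ((q^2 - p^2)^2) = (norm (q + p))^2 * (norm (p - q))^2"
    by (simp add: norm_mult norm_power)
  also have "\<dots> \<le> (2 * y)^2 * (norm (p - q))^2"
    using \<open>norm (q + p) \<le> 2 * y\<close> by (intro mult_right_mono power_mono) auto
  also have "\<dots> = 4 * y^2 * (norm (p - q))^2"
    by (simp add: power_mult_distrib)
  finally have square_bound: "norm ((q^2 - p^2)^2) \<le> 4 * y^2 * (norm (p - q))^2" .
  have "norm (4 * p * q * (q - p) * (q - p)) = 4 * (norm p * norm q) * (norm (p - q))^2"
    by (simp add: norm_mult power2_eq_square norm_minus_commute)
  also have "\<dots> \<le> 4 * y^2 * (norm (p - q))^2"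
    using mult_mono[OF \<open>norm p \<le> y\<close> \<open>norm q \<le> y\<close> \<open>0 \<le> y\<close> norm_ge_zero]
    by (intro mult_right_mono mult_left_mono) (auto simp: power2_eq_square)
  finally show ?thesis
    using square_bound by (simp add: y_def)
qed

definition P_at ::
  "complex poly poly \<Rightarrow> complex poly poly \<Rightarrow> nat \<Rightarrow> complex \<Rightarrow> complex \<Rightarrow> complex" where
  "P_at c1 c2 n a b = ev2 (fst (Fit c1 c2 n)) a b"

definition Q_at ::
  "complex poly poly \<Rightarrow> complex poly poly \<Rightarrow> nat \<Rightarrow> complex \<Rightarrow> complex \<Rightarrow> complex" where
  "Q_at c1 c2 n a b = ev2 (snd (Fit c1 c2 n)) a b"

definition R_at ::
  "complex poly poly \<Rightarrow> complex poly poly \<Rightarrow> nat \<Rightarrow> complex \<Rightarrow> complex \<Rightarrow> complex" where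
  "R_at c1 c2 n a b = ev2 (snd (Fit c1 c2 n) div T2) a b"

lemma Gapprox_eq:
  "Gapprox c1 c2 n a b =
     ln (max (cmod (P_at c1 c2 n a b)) (cmod (Q_at c1 c2 n a b))) / (4 ^ n * real (degF1 c1 c2))"
  by (simp add: Gapprox_def P_at_def Q_at_def)

context
  fixes c1 c2 :: "complex poly poly"
  assumes coprime_c1_c2: "coprime c1 c2"
begin

lemma snd_Fit_eq: "snd (Fit c1 c2 n) = T2 * (snd (Fit c1 c2 n) div T2)"
  using T2_dvd_snd_Fit[OF coprime_c1_c2] by simp

lemma Q_at_eq: "Q_at c1 c2 n a b = b * R_at c1 c2 n a b"
  unfolding Q_at_def R_at_def by (subst snd_Fit_eq) simp

lemma P_at_Suc:
  "P_at c1 c2 (Suc n) a b = (a * b * R_at c1 c2 n a b ^ 2 - P_at c1 c2 n a b ^ 2) ^ 2"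
  unfolding P_at_def R_at_def Fit_Suc_eq[OF snd_Fit_eq] by simp

lemma Q_at_Suc:
  "Q_at c1 c2 (Suc n) a b = 4 * b * P_at c1 c2 n a b * R_at c1 c2 n a b
     * (b * R_at c1 c2 n a b - P_at c1 c2 n a b) * (a * R_at c1 c2 n a b - P_at c1 c2 n a b)"
  unfolding P_at_def Q_at_def R_at_def Fit_Suc_eq[OF snd_Fit_eq] by simp

lemma Gapprox_tendsto_at_1_0:
  "(\<lambda>n. Gapprox c1 c2 n 1 0) \<longlonglongrightarrow> ln (cmod (P_at c1 c2 0 1 0)) / real (degF1 c1 c2)"
  unfolding Gapprox_eq
proof (rule tendsto_ln_div_four_pow[where c = 1 and K = 1])
  fix n
  let ?p = "P_at c1 c2 n 1 0"
  show "P_at c1 c2 (Suc n) 1 0 = ?p ^ 4"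
    by (simp add: P_at_Suc)
  have "max (cmod (P_at c1 c2 (Suc n) 1 0)) (cmod (Q_at c1 c2 (Suc n) 1 0))
      = (cmod ?p)^2 * (cmod ?p)^2"
    by (simp add: P_at_Suc Q_at_Suc norm_power flip: power_add)
  also have "\<dots> \<le> 1 * (max (cmod ?p) (cmod (Q_at c1 c2 n 1 0)))^2 * (cmod ?p)^2"
    by (rule mult_right_mono) (simp_all add: power_mono)
  finally show "max (cmod (P_at c1 c2 (Suc n) 1 0)) (cmod (Q_at c1 c2 (Suc n) 1 0))
      \<le> 1 * (max (cmod ?p) (cmod (Q_at c1 c2 n 1 0)))^2 * (cmod ?p)^2" .
qed (auto simp: le_max_iff_disj)

lemma Gapprox_tendsto_at_0_1:
  "(\<lambda>n. Gapprox c1 c2 n 0 1) \<longlonglongrightarrow> ln (cmod (P_at c1 c2 0 0 1)) / real (degF1 c1 c2)"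
  unfolding Gapprox_eq
proof (rule tendsto_ln_div_four_pow[where c = 1 and K = 8])
  fix n
  let ?p = "P_at c1 c2 n 0 1" and ?q = "Q_at c1 c2 n 0 1"
  show "P_at c1 c2 (Suc n) 0 1 = ?p ^ 4"
    by (simp add: P_at_Suc)
  have "Q_at c1 c2 (Suc n) 0 1 = 4 * ?p * ?q * (?q - ?p) * (0 - ?p)"
    by (simp add: Q_at_Suc Q_at_eq[of n])
  then show "max (cmod (P_at c1 c2 (Suc n) 0 1)) (cmod (Q_at c1 c2 (Suc n) 0 1))
      \<le> 8 * (max (cmod ?p) (cmod ?q))^2 * (cmod ?p)^2"
    using max_norm_step_at_0_1[of ?p ?q] by (simp add: P_at_Suc)
qed (auto simp: le_max_iff_disj)

lemma Gapprox_tendsto_at_1_1: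
  "(\<lambda>n. Gapprox c1 c2 n 1 1)
     \<longlonglongrightarrow> ln (cmod (P_at c1 c2 0 1 1 - Q_at c1 c2 0 1 1)) / real (degF1 c1 c2)"
  unfolding Gapprox_eq
proof (rule tendsto_ln_div_four_pow[where c = "1/2" and K = 4])
  fix n
  let ?p = "P_at c1 c2 n 1 1" and ?q = "Q_at c1 c2 n 1 1"
  have P_Suc: "P_at c1 c2 (Suc n) 1 1 = (?q^2 - ?p^2)^2"
    by (simp add: P_at_Suc Q_at_eq[of n])
  have Q_Suc: "Q_at c1 c2 (Suc n) 1 1 = 4 * ?p * ?q * (?q - ?p) * (?q - ?p)"
    by (simp add: Q_at_Suc Q_at_eq[of n])
  show "P_at c1 c2 (Suc n) 1 1 - Q_at c1 c2 (Suc n) 1 1 = (?p - ?q) ^ 4"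
    unfolding P_Suc Q_Suc by (simp add: power2_eq_square power4_eq_xxxx algebra_simps)
  show "1/2 * cmod (?p - ?q) \<le> max (cmod ?p) (cmod ?q)"
    using norm_triangle_ineq4[of ?p ?q] by linarith
  show "max (cmod (P_at c1 c2 (Suc n) 1 1)) (cmod (Q_at c1 c2 (Suc n) 1 1))
      \<le> 4 * (max (cmod ?p) (cmod ?q))^2 * (cmod (?p - ?q))^2"
    unfolding P_Suc Q_Suc by (rule max_norm_step_at_1_1)
qed (auto simp: le_max_iff_disj)

end

theorem proposition4p1:
  fixes c :: "complex poly fract" and c1 c2 :: "complex poly poly" and m :: nat
  assumes "homogeneous c1 m" and "homogeneous c2 m"
    and "coprime c1 c2" and "c2 \<noteq> 0"
    and "c = Fract (poly c1 1) (poly c2 1)"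
    and "c \<notin> {0, 1, Fract [:0, 1:] 1}"
  shows "((\<lambda>n. Gapprox c1 c2 n 1 0) \<longlonglongrightarrow>
            ln (cmod (ev2 (fst (F1 c1 c2)) 1 0)) / real (degF1 c1 c2)) \<and>
         ((\<lambda>n. Gapprox c1 c2 n 0 1) \<longlonglongrightarrow>
            ln (cmod (ev2 (fst (F1 c1 c2)) 0 1)) / real (degF1 c1 c2)) \<and>
         ((\<lambda>n. Gapprox c1 c2 n 1 1) \<longlonglongrightarrow>
            ln (cmod (ev2 (fst (F1 c1 c2)) 1 1 - ev2 (snd (F1 c1 c2)) 1 1)) / real (degF1 c1 c2))"
  using Gapprox_tendsto_at_1_0[OF \<open>coprime c1 c2\<close>] Gapprox_tendsto_at_0_1[OF \<open>coprime c1 c2\<close>]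
    Gapprox_tendsto_at_1_1[OF \<open>coprime c1 c2\<close>]
  by (simp add: P_at_def Q_at_def)

end
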